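(* Let $p$ be a prime and $1\le\ell<p$. For every $u\in\mathbb{F}_p$, \[\#S_\ell(u)=\binom{p}{\ell}\Big/p=S_\ell^*+S_{\ell-1}^*=S_\ell^{*0}+S_{\ell-1}^{*0}.\]
   Context: For $u\in\mathbb{F}_p$ and $0\le \ell\le p$, $S_\ell(u)=\{S\subseteq\mathbb{F}_p \mid \#S=\ell,\ \sum_{s\in S}s=u\}$, and for $0\le\ell<p$, $S_\ell^*(u)=\{S\subseteq\mathbb{F}_p^* \mid \#S=\ell,\ \sum_{s\in S}s=u\}$, where $\mathbb{F}_p^*=\mathbb{F}_p\setminus\{0\}$ and sums are in $\mathbb{F}_p$. The cardinality $\#S_\ell^*(u)$ does not depend on $u\in\mathbb{F}_p^*$; this common value is denoted $S_\ell^*$. Also $S_\ell^{*0}:=\#S_\ell^*(0)$. *)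

theory Defs
  imports Complex_Main "HOL-Computational_Algebra.Primes"
begin

text \<open>F_p is modelled by the residues {0..<p}; sums are taken mod p.\<close>

definition S_sets :: "nat \<Rightarrow> nat \<Rightarrow> nat \<Rightarrow> nat set set" where
  "S_sets p l u = {S. S \<subseteq> {0..<p} \<and> card S = l \<and> (\<Sum>S) mod p = u}"

definition S_star_sets :: "nat \<Rightarrow> nat \<Rightarrow> nat \<Rightarrow> nat set set" where
  "S_star_sets p l u = {S. S \<subseteq> {1..<p} \<and> card S = l \<and> (\<Sum>S) mod p = u}"

end

theory Submission
  imports Defs "HOL-Number_Theory.Cong"
begin

text \<open>
  Translating every element of a set by \<open>k\<close> modulo \<open>p\<close> preserves its size and
  adds \<open>l * k\<close> to the sum of an \<open>l\<close>-subset. Since \<open>l\<close> is invertible modulo \<open>p\<close>,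
  every residue class can be reached this way, so the \<open>p choose l\<close> subsets of size
  \<open>l\<close> are equidistributed among the \<open>p\<close> possible sums. Splitting an \<open>l\<close>-subset
  with sum \<open>v\<close> according to whether it contains \<open>0\<close> gives the decomposition into
  \<open>S_star_sets p l v\<close> and \<open>S_star_sets p (l - 1) v\<close>.
\<close>

lemma finite_S_sets: "finite (S_sets p l u)"
  unfolding S_sets_def by (rule finite_subset[of _ "Pow {0..<p}"]) auto

lemma finite_S_star_sets: "finite (S_star_sets p l u)"
  unfolding S_star_sets_def by (rule finite_subset[of _ "Pow {1..<p}"]) auto

lemma S_sets_Suc_eq:
  assumes "0 < p"
  shows "S_sets p (Suc l) u = S_star_sets p (Suc l) u \<union> insert 0 ` S_star_sets p l u"
proof (intro equalityI subsetI)
  fix S assume S: "S \<in> S_sets p (Suc l) u"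
  then have fin: "finite S"
    unfolding S_sets_def by (auto intro: finite_subset)
  show "S \<in> S_star_sets p (Suc l) u \<union> insert 0 ` S_star_sets p l u"
  proof (cases "0 \<in> S")
    case False
    then have "S \<subseteq> {1..<p}"
      using S unfolding S_sets_def by (auto simp: subset_iff Suc_le_eq intro: gr0I)
    then show ?thesis
      using S unfolding S_sets_def S_star_sets_def by auto
  next
    case True
    then have "S - {0} \<in> S_star_sets p l u"
      using S fin unfolding S_sets_def S_star_sets_def by (auto simp: sum_diff1_nat)
    moreover have "S = insert 0 (S - {0})"
      using True by auto
    ultimately show ?thesis by blast
  qed
next
  fix S assume "S \<in> S_star_sets p (Suc l) u \<union> insert 0 ` S_star_sets p l u"
  then show "S \<in> S_sets p (Suc l) u"
  proof
    assume "S \<in> S_star_sets p (Suc l) u"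
    then show ?thesis
      unfolding S_sets_def S_star_sets_def by auto
  next
    assume "S \<in> insert 0 ` S_star_sets p l u"
    then obtain T where T: "T \<in> S_star_sets p l u" and S_eq: "S = insert 0 T"
      by auto
    then have "finite T" "0 \<notin> T"
      unfolding S_star_sets_def by (auto intro: finite_subset)
    then have "card S = Suc l" "\<Sum>S = \<Sum>T"
      using T unfolding S_eq S_star_sets_def by simp_all
    moreover have "S \<subseteq> {0..<p}"
      using T assms unfolding S_eq S_star_sets_def by auto
    ultimately show ?thesis
      using T unfolding S_sets_def S_star_sets_def by simp
  qed
qed

lemma card_S_sets_Suc:
  assumes "0 < p"
  shows "card (S_sets p (Suc l) u) = card (S_star_sets p (Suc l) u) + card (S_star_sets p l u)"
proof -
  have inj: "inj_on (insert 0) (S_star_sets p l u)"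
  proof (rule inj_onI)
    fix A B
    assume "A \<in> S_star_sets p l u" "B \<in> S_star_sets p l u" "insert 0 A = insert 0 B"
    moreover from this(1,2) have "0 \<notin> A" "0 \<notin> B"
      unfolding S_star_sets_def by auto
    ultimately show "A = B"
      by (metis Diff_insert_absorb)
  qed
  have disjoint: "S_star_sets p (Suc l) u \<inter> insert 0 ` S_star_sets p l u = {}"
    unfolding S_star_sets_def by auto
  have "card (S_sets p (Suc l) u)
      = card (S_star_sets p (Suc l) u) + card (insert 0 ` S_star_sets p l u)"
    unfolding S_sets_Suc_eq[OF assms]
    by (intro card_Un_disjoint finite_S_star_sets finite_imageI disjoint)
  also have "card (insert 0 ` S_star_sets p l u) = card (S_star_sets p l u)"
    using inj by (rule card_image)
  finally show ?thesis .
qed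

lemma inj_on_add_mod: "inj_on (\<lambda>x. (x + k) mod p) {0..<p::nat}"
proof (rule inj_onI)
  fix x y
  assume "x \<in> {0..<p}" "y \<in> {0..<p}" and "(x + k) mod p = (y + k) mod p"
  then show "x = y"
    using cong_add_rcancel_nat[of x k y p] by (simp add: cong_def)
qed

lemma sum_image_add_mod:
  assumes "S \<subseteq> {0..<p}"
  shows "(\<Sum>((\<lambda>x. (x + k) mod p) ` S)) mod p = (\<Sum>S + card S * k) mod p"
proof -
  have "inj_on (\<lambda>x. (x + k) mod p) S"
    using inj_on_subset[OF inj_on_add_mod assms] .
  then have "(\<Sum>((\<lambda>x. (x + k) mod p) ` S)) mod p = (\<Sum>x\<in>S. (x + k) mod p) mod p"
    by (simp add: sum.reindex)
  also have "\<dots> = (\<Sum>x\<in>S. x + k) mod p"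
    by (rule mod_sum_eq)
  finally show ?thesis
    by (simp add: sum.distrib)
qed

lemma card_S_sets_le_shift:
  "card (S_sets p l u) \<le> card (S_sets p l ((u + l * k) mod p))"
proof -
  let ?f = "\<lambda>x. (x + k) mod p"
  have inj: "inj_on ((`) ?f) (S_sets p l u)"
    using inj_on_image_eq_iff[OF inj_on_add_mod] by (intro inj_onI) (auto simp: S_sets_def)
  have "?f ` S \<in> S_sets p l ((u + l * k) mod p)" if S: "S \<in> S_sets p l u" for S
  proof -
    have sub: "S \<subseteq> {0..<p}" and card_S: "card S = l" and sum_S: "\<Sum>S mod p = u"
      using S unfolding S_sets_def by auto
    have "?f ` S \<subseteq> {0..<p}"
      using sub by (cases "S = {}") auto
    moreover have "card (?f ` S) = l"
      using card_S card_image[OF inj_on_subset[OF inj_on_add_mod sub]] by simp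
    moreover have "\<Sum>(?f ` S) mod p = (u + l * k) mod p"
      using sum_image_add_mod[OF sub] card_S by (simp add: sum_S[symmetric] mod_add_left_eq)
    ultimately show ?thesis
      unfolding S_sets_def by blast
  qed
  then have "(`) ?f ` S_sets p l u \<subseteq> S_sets p l ((u + l * k) mod p)"
    by blast
  then show ?thesis
    by (rule card_inj_on_le[OF inj _ finite_S_sets])
qed

lemma card_S_sets_eq:
  assumes "coprime l p" and "u < p" and "v < p"
  shows "card (S_sets p l u) = card (S_sets p l v)"
proof -
  have reachable: "\<exists>k. (a + l * k) mod p = b" if "a < p" "b < p" for a b
  proof -
    obtain x where x: "[l * x = 1] (mod p)"
      using cong_solve_coprime_nat[OF assms(1)] by auto
    have "[a + l * (x * (b + p - a)) = a + 1 * (b + p - a)] (mod p)"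
      using x by (simp only: mult.assoc[symmetric] cong_add cong_scalar_right cong_refl)
    then have "(a + l * (x * (b + p - a))) mod p = b"
      using that by (simp add: cong_def)
    then show ?thesis ..
  qed
  show ?thesis
    using reachable[OF assms(2,3)] reachable[OF assms(3,2)]
      card_S_sets_le_shift[of p l u] card_S_sets_le_shift[of p l v]
    by (metis le_antisym)
qed

lemma sum_card_S_sets:
  assumes "0 < p"
  shows "(\<Sum>u<p. card (S_sets p l u)) = p choose l"
proof -
  have "{S. S \<subseteq> {0..<p} \<and> card S = l} = (\<Union>u<p. S_sets p l u)"
    unfolding S_sets_def using assms by auto
  then have "p choose l = card (\<Union>u<p. S_sets p l u)"
    using n_subsets[of "{0..<p}" l] by simp
  also have "\<dots> = (\<Sum>u<p. card (S_sets p l u))"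
    by (rule card_UN_disjoint) (auto simp: finite_S_sets S_sets_def)
  finally show ?thesis ..
qed

theorem proposition4:
  fixes p l u :: nat
  assumes "prime p" and "1 \<le> l" and "l < p" and "u < p"
  shows "real (card (S_sets p l u)) = real (p choose l) / real p
    \<and> (\<forall>v\<in>{1..<p}. card (S_sets p l u)
          = card (S_star_sets p l v) + card (S_star_sets p (l - 1) v))
    \<and> card (S_sets p l u) = card (S_star_sets p l 0) + card (S_star_sets p (l - 1) 0)"
proof -
  have "0 < p"
    using assms(3) by simp
  have "\<not> p dvd l"
    using assms(2,3) by (simp add: nat_dvd_not_less)
  then have "coprime l p"
    using assms(1) by (metis prime_imp_coprime coprime_commute)
  then have equidistributed: "card (S_sets p l v) = card (S_sets p l u)" if "v < p" for v
    using card_S_sets_eq that assms(4) by blast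
  then have "p choose l = p * card (S_sets p l u)"
    using sum_card_S_sets[OF \<open>0 < p\<close>, of l] by simp
  then have mean: "real (card (S_sets p l u)) = real (p choose l) / real p"
    using \<open>0 < p\<close> by (simp add: field_simps)
  obtain m where "l = Suc m"
    using assms(2) by (cases l) auto
  then have split: "card (S_sets p l u) = card (S_star_sets p l v) + card (S_star_sets p (l - 1) v)"
    if "v < p" for v
    using equidistributed[OF that] card_S_sets_Suc[OF \<open>0 < p\<close>] by simp
  show ?thesis
    using mean split[OF \<open>0 < p\<close>] split by simp
qed

end
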